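(* Let $e_0,e_1\ge0$ be integers and let $\mathbf{x}_1,\mathbf{x}_2\in\mathbb{F}_2^n$ be such that $(\mathbf{x}_1,\mathbf{x}_2)$ are $(e_0+e_1,e_0+e_1)$-close. Then there exists a vector $\mathbf{y}\in\mathbb{F}_2^n$ such that both $(\mathbf{x}_1,\mathbf{y})$ and $(\mathbf{x}_2,\mathbf{y})$ are $(e_0,e_1)$-close.
   Context: For $\mathbf{x}\in\mathbb{F}_2^n$, $\mathrm{supp}(\mathbf{x})$ is the set of coordinates where $\mathbf{x}$ is $1$. For $\mathbf{x},\mathbf{y}\in\mathbb{F}_2^n$, the ordered pair $(\mathbf{x},\mathbf{y})$ is called $(e_0,e_1)$-far iff $|\mathrm{supp}(\mathbf{y})\setminus\mathrm{supp}(\mathbf{x})|>e_0$ or $|\mathrm{supp}(\mathbf{x})\setminus\mathrm{supp}(\mathbf{y})|>e_1$; otherwise $(\mathbf{x},\mathbf{y})$ is $(e_0,e_1)$-close. *)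

theory Defs
  imports Main
begin

text \<open>A vector of F_2^n is represented as a boolean list of length n
  (True = 1, False = 0). Coordinates are 0..n-1.\<close>

definition supp :: "bool list \<Rightarrow> nat set" where
  "supp x = {i. i < length x \<and> x ! i}"

definition far :: "nat \<Rightarrow> nat \<Rightarrow> bool list \<Rightarrow> bool list \<Rightarrow> bool" where
  "far e0 e1 x y \<longleftrightarrow> card (supp y - supp x) > e0 \<or> card (supp x - supp y) > e1"

definition close :: "nat \<Rightarrow> nat \<Rightarrow> bool list \<Rightarrow> bool list \<Rightarrow> bool" where
  "close e0 e1 x y \<longleftrightarrow> \<not> far e0 e1 x y"

end

theory Submission
  imports Defs
begin

text \<open>Put A = supp x1 - supp x2 and B = supp x2 - supp x1, both of size at most e0 + e1.
  Split A = A0 \<union> A1 and B = B0 \<union> B1 with |A0|, |B0| \<le> e0 and |A1|, |B1| \<le> e1, and let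
  y have support (supp x1 \<inter> supp x2) \<union> A0 \<union> B0. Passing from x1 to y adds B0 and removes
  A1; passing from x2 to y adds A0 and removes B1.\<close>

lemma finite_split_card_le_add:
  assumes "finite A" and "card A \<le> a + b"
  obtains A' where "A' \<subseteq> A" and "card A' \<le> a" and "card (A - A') \<le> b"
proof -
  obtain A' where A': "A' \<subseteq> A" "card A' = min (card A) a"
    using obtain_subset_with_card_n[of "min (card A) a" A] by auto
  have "card (A - A') = card A - card A'"
    using A'(1) assms(1) by (meson card_Diff_subset finite_subset)
  with A' assms(2) show thesis
    by (intro that[of A']) auto
qed

lemma common_close_set:
  fixes S1 S2 :: "'a set"
  assumes "finite S1" and "finite S2"
    and "card (S1 - S2) \<le> e0 + e1" and "card (S2 - S1) \<le> e0 + e1"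
  obtains Y where "Y \<subseteq> S1 \<union> S2"
    and "card (Y - S1) \<le> e0" and "card (S1 - Y) \<le> e1"
    and "card (Y - S2) \<le> e0" and "card (S2 - Y) \<le> e1"
proof -
  obtain A0 where A0: "A0 \<subseteq> S1 - S2" "card A0 \<le> e0" "card ((S1 - S2) - A0) \<le> e1"
    using finite_split_card_le_add[of "S1 - S2" e0 e1] assms(1,3) by auto
  obtain B0 where B0: "B0 \<subseteq> S2 - S1" "card B0 \<le> e0" "card ((S2 - S1) - B0) \<le> e1"
    using finite_split_card_le_add[of "S2 - S1" e0 e1] assms(2,4) by auto
  define Y where "Y = (S1 \<inter> S2) \<union> A0 \<union> B0"
  have "Y - S1 = B0" and "S1 - Y = (S1 - S2) - A0"
    and "Y - S2 = A0" and "S2 - Y = (S2 - S1) - B0"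
    using A0(1) B0(1) unfolding Y_def by auto
  moreover have "Y \<subseteq> S1 \<union> S2"
    using A0(1) B0(1) unfolding Y_def by auto
  ultimately show thesis
    using A0 B0 by (intro that[of Y]) auto
qed

lemma supp_subset_lessThan_length: "supp x \<subseteq> {..<length x}"
  unfolding supp_def by auto

lemma supp_map_mem_upt:
  assumes "Y \<subseteq> {..<n}"
  shows "supp (map (\<lambda>i. i \<in> Y) [0..<n]) = Y"
  using assms unfolding supp_def by auto

lemma close_iff_card:
  "close e0 e1 x y \<longleftrightarrow> card (supp y - supp x) \<le> e0 \<and> card (supp x - supp y) \<le> e1"
  unfolding close_def far_def by auto

theorem lemma1:
  fixes e0 e1 n :: nat and x1 x2 :: "bool list"
  assumes "length x1 = n" and "length x2 = n"
    and "close (e0 + e1) (e0 + e1) x1 x2"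
  shows "\<exists>y. length y = n \<and> close e0 e1 x1 y \<and> close e0 e1 x2 y"
proof -
  have supps: "supp x1 \<subseteq> {..<n}" "supp x2 \<subseteq> {..<n}"
    using supp_subset_lessThan_length[of x1] supp_subset_lessThan_length[of x2] assms(1,2)
    by simp_all
  then have finite: "finite (supp x1)" "finite (supp x2)"
    by (auto intro: finite_subset)
  have card_diff: "card (supp x1 - supp x2) \<le> e0 + e1" "card (supp x2 - supp x1) \<le> e0 + e1"
    using assms(3) unfolding close_iff_card by auto
  obtain Y where "Y \<subseteq> supp x1 \<union> supp x2"
    and "card (Y - supp x1) \<le> e0" "card (supp x1 - Y) \<le> e1"
    and "card (Y - supp x2) \<le> e0" "card (supp x2 - Y) \<le> e1"
    by (rule common_close_set[OF finite card_diff])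
  moreover from this(1) have "supp (map (\<lambda>i. i \<in> Y) [0..<n]) = Y"
    using supps by (intro supp_map_mem_upt) auto
  ultimately show ?thesis
    unfolding close_iff_card by (intro exI[of _ "map (\<lambda>i. i \<in> Y) [0..<n]"]) auto
qed

end
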